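(* Let $\{y_t\}_{t\in\mathbb{Z}}$ be a real, mean-zero, covariance-stationary series with $\mathcal{F}_t=\sigma(y_s,\,s\le t)$, such that $y_t=\sum_{s=0}^{\infty}\kappa_s\epsilon_{t-s}$ with $\kappa_0=1$, $\sum_s|\kappa_s|<\infty$, $\kappa(z)=\sum_s\kappa_sz^s\ne0$ for $|z|\le1$, $\{\epsilon_t\}$ a martingale difference sequence with respect to $\{\mathcal{F}_t\}$, $E[\epsilon_t^2\mid\mathcal{F}_{t-1}]=\sigma_\epsilon^2$ a.s. (constant), and $\sup_t|\epsilon_t|\le K<\infty$ a.s. Suppose moreover that $\sup_tE[|\epsilon_t|^{2p}\mid\mathcal{F}_{t-1}]<\infty$ a.s. for some $p>1$. Then for any sequence $\hat y_t=y_t-\tilde y_{t-1}$ in which each $\tilde y_{t-1}$ is $\mathcal{F}_{t-1}$-measurable, it holds that $\liminf_{t\to\infty}t^{-1}\sum_{s=1}^t\hat y_s^2\ge\sigma_\epsilon^2$ almost surely, where $\sigma_\epsilon^2=E[\epsilon_t^2]$. *)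

theory Defs
  imports "HOL-Probability.Probability"
begin

definition natfilt :: "'a measure \<Rightarrow> (int \<Rightarrow> 'a \<Rightarrow> real) \<Rightarrow> int \<Rightarrow> 'a measure" where
  "natfilt M y t = sigma (space M) {y s -` A \<inter> space M | s A. s \<le> t \<and> A \<in> sets borel}"

end

theory Submission
  imports Defs
begin

text \<open>Since \<open>kappa 0 = 1\<close>, the prediction error \<open>y t - ytil (t - 1)\<close> is \<open>eps t + z t\<close>
  with \<open>z t\<close> measurable w.r.t. \<open>F (t - 1)\<close>. For an innovation bounded by \<open>K\<close> with conditional
  mean 0 and conditional variance \<open>\<sigma>\<^sup>2\<close>, the bound \<open>exp (-u) \<le> 1 - u + u\<^sup>2\<close> (used when
  \<open>\<bar>z t\<bar> < 2 K\<close>; otherwise \<open>(eps t + z t)\<^sup>2 \<ge> K\<^sup>2 \<ge> \<sigma>\<^sup>2\<close>) gives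
  \<open>E[exp (-\<lambda> (eps t + z t)\<^sup>2) | F (t - 1)] \<le> exp (-\<lambda> \<sigma>\<^sup>2 + c \<lambda>\<^sup>2)\<close> for any \<open>c \<ge> 81 K\<^sup>4\<close>, uniformly
  in \<open>z t\<close>. Hence \<open>E[exp (-\<lambda> S n)] \<le> exp (n (-\<lambda> \<sigma>\<^sup>2 + c \<lambda>\<^sup>2))\<close> for the sum \<open>S n\<close> of the first
  \<open>n\<close> squared prediction errors, and the Chernoff bound with \<open>\<lambda> = \<delta> / (2 c)\<close> gives
  \<open>P (S n \<le> (\<sigma>\<^sup>2 - \<delta>) n) \<le> exp (-n \<delta>\<^sup>2 / (4 c))\<close>. These probabilities are summable, so by
  Borel-Cantelli \<open>S n > (\<sigma>\<^sup>2 - \<delta>) n\<close> eventually, almost surely.\<close>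

lemma exp_minus_le_quadratic:
  fixes u :: real
  assumes "0 \<le> u"
  shows "exp (-u) \<le> 1 - u + u\<^sup>2"
proof -
  have "exp (-u) = 1 / exp u"
    by (simp add: exp_minus field_simps)
  also have "\<dots> \<le> 1 / (1 + u)"
    using assms by (intro divide_left_mono) auto
  also have "\<dots> \<le> 1 - u + u\<^sup>2"
  proof -
    have "1 \<le> (1 + u) * (1 - u + u\<^sup>2)"
      using assms by (simp add: power2_eq_square algebra_simps)
    then show ?thesis
      using assms by (simp add: field_simps)
  qed
  finally show ?thesis .
qed

lemma exp_minus_sq_shift_le_near:
  fixes e z K l c :: real
  assumes "\<bar>e\<bar> \<le> K" "\<bar>z\<bar> < 2 * K" "0 \<le> l" "81 * K ^ 4 \<le> c"
  shows "exp (-l * (e + z)\<^sup>2) \<le> 1 + c * l\<^sup>2 - 2 * l * z * e - l * e\<^sup>2"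
proof -
  define u where "u = l * (e + z)\<^sup>2"
  have u_nonneg: "0 \<le> u"
    unfolding u_def using assms(3) by simp
  have "(e + z)\<^sup>2 \<le> (3 * K)\<^sup>2"
    using assms(1,2) by (intro abs_le_square_iff[THEN iffD1]) auto
  then have "u \<le> l * (9 * K\<^sup>2)"
    unfolding u_def using assms(3) by (simp add: mult_left_mono power_mult_distrib)
  then have "u\<^sup>2 \<le> (l * (9 * K\<^sup>2))\<^sup>2"
    using u_nonneg by (simp add: power_mono)
  also have "\<dots> = 81 * K ^ 4 * l\<^sup>2"
    by (simp add: power_mult_distrib power2_eq_square eval_nat_numeral)
  also have "\<dots> \<le> c * l\<^sup>2"
    using assms(4) by (simp add: mult_right_mono)
  finally have "exp (-u) \<le> 1 - u + c * l\<^sup>2"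
    using exp_minus_le_quadratic[OF u_nonneg] by linarith
  moreover have "0 \<le> l * z\<^sup>2"
    using assms(3) by simp
  ultimately show ?thesis
    unfolding u_def by (simp add: power2_eq_square algebra_simps)
qed

lemma exp_minus_sq_shift_le_quadratic:
  fixes e z K l c :: real
  assumes e: "\<bar>e\<bar> \<le> K" and l: "0 \<le> l" and c: "81 * K ^ 4 \<le> c"
  shows "exp (-l * (e + z)\<^sup>2) \<le> (if \<bar>z\<bar> < 2 * K then 1 + c * l\<^sup>2 else exp (-l * K\<^sup>2))
    + (if \<bar>z\<bar> < 2 * K then - 2 * l * z else 0) * e + (if \<bar>z\<bar> < 2 * K then - l else 0) * e\<^sup>2"
proof (cases "\<bar>z\<bar> < 2 * K")
  case True
  then show ?thesis
    using exp_minus_sq_shift_le_near[OF e True l c] by (simp add: algebra_simps)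
next
  case False
  then have "K\<^sup>2 \<le> (e + z)\<^sup>2"
    using e by (intro abs_le_square_iff[THEN iffD1]) auto
  then show ?thesis
    using False l by (simp add: mult_left_mono)
qed

lemma integral_mult_eq_cond_exp_const:
  fixes f h :: "'a \<Rightarrow> real"
  assumes "sigma_finite_subalgebra M F" and "integrable M (\<lambda>x. h x * f x)"
    and "h \<in> borel_measurable F" and "f \<in> borel_measurable M"
    and "AE x in M. real_cond_exp M F f x = c"
  shows "(\<integral>x. h x * f x \<partial>M) = (\<integral>x. h x \<partial>M) * c"
proof -
  have "subalgebra M F"
    using assms(1) by (simp add: sigma_finite_subalgebra_def)
  then have [measurable]: "h \<in> borel_measurable M"
    using assms(3) by (rule measurable_from_subalg)
  have "(\<integral>x. h x * f x \<partial>M) = (\<integral>x. h x * real_cond_exp M F f x \<partial>M)"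
    using sigma_finite_subalgebra.real_cond_exp_intg(2)[OF assms(1-4)] by simp
  also have "\<dots> = (\<integral>x. h x * c \<partial>M)"
    using assms(5) by (intro integral_cong_AE) (auto elim!: eventually_mono)
  finally show ?thesis
    by simp
qed

lemma cond_var_le_sq_bound:
  fixes e :: "'a \<Rightarrow> real"
  assumes "prob_space M" and "sigma_finite_subalgebra M F" and "e \<in> borel_measurable M"
    and e_bdd: "AE x in M. \<bar>e x\<bar> \<le> K"
    and e_var: "AE x in M. real_cond_exp M F (\<lambda>x. (e x)\<^sup>2) x = s2"
  shows "s2 \<le> K\<^sup>2"
proof -
  interpret prob_space M by fact
  have e_sq_bdd: "AE x in M. (e x)\<^sup>2 \<le> K\<^sup>2"
    using e_bdd by eventually_elim (auto intro: abs_le_square_iff[THEN iffD1] order_trans)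
  have int_e_sq: "integrable M (\<lambda>x. (e x)\<^sup>2)"
    by (rule integrable_const_bound[where B = "K\<^sup>2"]) (use e_sq_bdd assms(3) in auto)
  have "s2 = (\<integral>x. 1 * (e x)\<^sup>2 \<partial>M)"
    using integral_mult_eq_cond_exp_const[OF assms(2) _ _ _ e_var, of "\<lambda>_. 1"] int_e_sq assms(3)
    by (simp add: prob_space)
  also have "\<dots> \<le> (\<integral>x. K\<^sup>2 \<partial>M)"
    using int_e_sq e_sq_bdd by (intro integral_mono_AE) auto
  finally show ?thesis
    by (simp add: prob_space)
qed

lemma abs_mult_le_of_abs_le:
  fixes u v p q :: real
  assumes "\<bar>u\<bar> \<le> p" and "\<bar>v\<bar> \<le> q"
  shows "\<bar>u * v\<bar> \<le> p * q"
  using assms by (simp add: abs_mult mult_mono')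

lemma integral_quadratic_in_innovation:
  fixes H0 H1 H2 e :: "'a \<Rightarrow> real"
  assumes "prob_space M" and sf: "sigma_finite_subalgebra M F"
    and [measurable]: "e \<in> borel_measurable M"
    and H1_F: "H1 \<in> borel_measurable F" and H2_F: "H2 \<in> borel_measurable F"
    and e_bdd: "AE x in M. \<bar>e x\<bar> \<le> K"
    and e_mds: "AE x in M. real_cond_exp M F e x = 0"
    and e_var: "AE x in M. real_cond_exp M F (\<lambda>x. (e x)\<^sup>2) x = s2"
    and int_H0: "integrable M H0" and H1_bdd: "\<And>x. \<bar>H1 x\<bar> \<le> b" and H2_bdd: "\<And>x. \<bar>H2 x\<bar> \<le> c"
  shows "integrable M (\<lambda>x. H0 x + H1 x * e x + H2 x * (e x)\<^sup>2)"
    and "(\<integral>x. H0 x + H1 x * e x + H2 x * (e x)\<^sup>2 \<partial>M) = (\<integral>x. H0 x + H2 x * s2 \<partial>M)"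
proof -
  interpret prob_space M by fact
  have subalg: "subalgebra M F"
    using sf by (simp add: sigma_finite_subalgebra_def)
  note [measurable] = measurable_from_subalg[OF subalg H1_F] measurable_from_subalg[OF subalg H2_F]
  have e_sq_bdd: "AE x in M. \<bar>(e x)\<^sup>2\<bar> \<le> K\<^sup>2"
    using e_bdd by eventually_elim (auto intro: abs_le_square_iff[THEN iffD1] order_trans)
  have int_H1e: "integrable M (\<lambda>x. H1 x * e x)"
    by (rule integrable_const_bound[where B = "b * K"])
       (use e_bdd in \<open>auto elim!: eventually_mono intro!: abs_mult_le_of_abs_le H1_bdd\<close>)
  have int_H2e: "integrable M (\<lambda>x. H2 x * (e x)\<^sup>2)"
    by (rule integrable_const_bound[where B = "c * K\<^sup>2"])
       (use e_sq_bdd in \<open>auto elim!: eventually_mono intro!: abs_mult_le_of_abs_le H2_bdd\<close>)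
  have int_H2: "integrable M H2"
    by (rule integrable_const_bound[where B = c]) (auto intro!: AE_I2 H2_bdd)
  show "integrable M (\<lambda>x. H0 x + H1 x * e x + H2 x * (e x)\<^sup>2)"
    using int_H0 int_H1e int_H2e by simp
  have "(\<integral>x. H0 x + H1 x * e x + H2 x * (e x)\<^sup>2 \<partial>M)
      = (\<integral>x. H0 x \<partial>M) + (\<integral>x. H1 x * e x \<partial>M) + (\<integral>x. H2 x * (e x)\<^sup>2 \<partial>M)"
    using int_H0 int_H1e int_H2e by simp
  also have "\<dots> = (\<integral>x. H0 x \<partial>M) + (\<integral>x. H1 x \<partial>M) * 0 + (\<integral>x. H2 x \<partial>M) * s2"
    using integral_mult_eq_cond_exp_const[OF sf int_H1e H1_F _ e_mds]
      integral_mult_eq_cond_exp_const[OF sf int_H2e H2_F _ e_var] by simp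
  also have "\<dots> = (\<integral>x. H0 x + H2 x * s2 \<partial>M)"
    using int_H0 int_H2 by simp
  finally show "(\<integral>x. H0 x + H1 x * e x + H2 x * (e x)\<^sup>2 \<partial>M) = (\<integral>x. H0 x + H2 x * s2 \<partial>M)" .
qed

lemma integral_mult_le_of_quadratic_majorant:
  fixes W A B C G e :: "'a \<Rightarrow> real"
  assumes "prob_space M" and sf: "sigma_finite_subalgebra M F"
    and e_M [measurable]: "e \<in> borel_measurable M" and [measurable]: "W \<in> borel_measurable M"
    and A_F: "A \<in> borel_measurable F" and B_F: "B \<in> borel_measurable F"
    and C_F: "C \<in> borel_measurable F" and G_F: "G \<in> borel_measurable F"
    and e_bdd: "AE x in M. \<bar>e x\<bar> \<le> K"
    and e_mds: "AE x in M. real_cond_exp M F e x = 0"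
    and e_var: "AE x in M. real_cond_exp M F (\<lambda>x. (e x)\<^sup>2) x = s2"
    and bdd: "\<And>x. \<bar>W x\<bar> \<le> w" "\<And>x. \<bar>A x\<bar> \<le> a" "\<And>x. \<bar>B x\<bar> \<le> b" "\<And>x. \<bar>C x\<bar> \<le> c"
      "\<And>x. \<bar>G x\<bar> \<le> g"
    and G_nonneg: "\<And>x. 0 \<le> G x"
    and majorant: "AE x in M. W x \<le> A x + B x * e x + C x * (e x)\<^sup>2"
    and mean_le: "\<And>x. A x + C x * s2 \<le> \<rho>"
  shows "(\<integral>x. G x * W x \<partial>M) \<le> \<rho> * (\<integral>x. G x \<partial>M)"
proof -
  interpret prob_space M by fact
  have subalg: "subalgebra M F"
    using sf by (simp add: sigma_finite_subalgebra_def)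
  have GA_F: "(\<lambda>x. G x * A x) \<in> borel_measurable F" and GB_F: "(\<lambda>x. G x * B x) \<in> borel_measurable F"
    and GC_F: "(\<lambda>x. G x * C x) \<in> borel_measurable F"
    using A_F B_F C_F G_F by measurable
  note [measurable] = measurable_from_subalg[OF subalg GA_F] measurable_from_subalg[OF subalg GC_F]
    measurable_from_subalg[OF subalg G_F]
  have int_GA: "integrable M (\<lambda>x. G x * A x)"
    by (rule integrable_const_bound[where B = "g * a"]) (auto intro!: AE_I2 abs_mult_le_of_abs_le bdd)
  have int_GC: "integrable M (\<lambda>x. G x * C x)"
    by (rule integrable_const_bound[where B = "g * c"]) (auto intro!: AE_I2 abs_mult_le_of_abs_le bdd)
  have int_GW: "integrable M (\<lambda>x. G x * W x)"
    by (rule integrable_const_bound[where B = "g * w"]) (auto intro!: AE_I2 abs_mult_le_of_abs_le bdd)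
  note quadratic = integral_quadratic_in_innovation[OF assms(1) sf e_M GB_F GC_F e_bdd e_mds e_var int_GA
      abs_mult_le_of_abs_le[OF bdd(5,3)] abs_mult_le_of_abs_le[OF bdd(5,4)]]
  have "AE x in M. G x * W x \<le> G x * A x + G x * B x * e x + G x * C x * (e x)\<^sup>2"
    using majorant
  proof eventually_elim
    case (elim x)
    then have "G x * W x \<le> G x * (A x + B x * e x + C x * (e x)\<^sup>2)"
      by (rule mult_left_mono[OF _ G_nonneg])
    then show ?case
      by (simp add: algebra_simps)
  qed
  then have "(\<integral>x. G x * W x \<partial>M) \<le> (\<integral>x. G x * A x + G x * B x * e x + G x * C x * (e x)\<^sup>2 \<partial>M)"
    using int_GW quadratic(1) by (intro integral_mono_AE)
  also have "\<dots> = (\<integral>x. G x * A x + G x * C x * s2 \<partial>M)"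
    using quadratic(2) by simp
  also have "\<dots> \<le> (\<integral>x. G x * \<rho> \<partial>M)"
  proof (rule integral_mono)
    show "G x * A x + G x * C x * s2 \<le> G x * \<rho>" for x
      using mult_left_mono[OF mean_le G_nonneg, of x] by (simp add: algebra_simps)
    show "integrable M (\<lambda>x. G x * A x + G x * C x * s2)"
      using int_GA int_GC by simp
    show "integrable M (\<lambda>x. G x * \<rho>)"
      by (rule integrable_const_bound[where B = "g * \<bar>\<rho>\<bar>"]) (auto intro!: AE_I2 abs_mult_le_of_abs_le bdd)
  qed
  finally show ?thesis
    by (simp add: mult.commute)
qed

lemma integral_mult_exp_minus_sq_le:
  fixes e z G :: "'a \<Rightarrow> real"
  assumes "prob_space M" and sf: "sigma_finite_subalgebra M F"
    and [measurable]: "e \<in> borel_measurable M"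
    and z_F [measurable]: "z \<in> borel_measurable F" and G_F [measurable]: "G \<in> borel_measurable F"
    and e_bdd: "AE x in M. \<bar>e x\<bar> \<le> K"
    and e_mds: "AE x in M. real_cond_exp M F e x = 0"
    and e_var: "AE x in M. real_cond_exp M F (\<lambda>x. (e x)\<^sup>2) x = s2"
    and G_nonneg: "\<And>x. 0 \<le> G x" and G_le_1: "\<And>x. G x \<le> 1"
    and l: "0 < l" and c: "81 * K ^ 4 \<le> c"
  shows "(\<integral>x. G x * exp (-l * (e x + z x)\<^sup>2) \<partial>M) \<le> exp (-l * s2 + c * l\<^sup>2) * (\<integral>x. G x \<partial>M)"
proof -
  interpret prob_space M by fact
  have subalg: "subalgebra M F"
    using sf by (simp add: sigma_finite_subalgebra_def)
  have [measurable]: "z \<in> borel_measurable M" "G \<in> borel_measurable M"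
    using measurable_from_subalg[OF subalg z_F] measurable_from_subalg[OF subalg G_F] by auto
  have "0 \<le> K ^ 4"
    by (simp add: zero_le_even_power)
  then have c_nonneg: "0 \<le> c"
    using c by linarith
  define \<rho> where "\<rho> = exp (-l * s2 + c * l\<^sup>2)"
  define A where "A x = (if \<bar>z x\<bar> < 2 * K then 1 + c * l\<^sup>2 else exp (-l * K\<^sup>2))" for x
  define B where "B x = (if \<bar>z x\<bar> < 2 * K then - 2 * l * z x else 0)" for x
  define C where "C x = (if \<bar>z x\<bar> < 2 * K then - l else 0)" for x
  have mean_le_\<rho>: "A x + C x * s2 \<le> \<rho>" for x
  proof -
    have "1 + c * l\<^sup>2 - l * s2 \<le> \<rho>"
      unfolding \<rho>_def using exp_ge_add_one_self[of "-l * s2 + c * l\<^sup>2"] by linarith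
    moreover have "l * s2 \<le> l * K\<^sup>2" "0 \<le> c * l\<^sup>2"
      using cond_var_le_sq_bound[OF assms(1) sf _ e_bdd e_var] l c_nonneg by (auto intro: mult_left_mono)
    then have "exp (-l * K\<^sup>2) \<le> \<rho>"
      unfolding \<rho>_def by simp
    ultimately show ?thesis
      by (simp add: A_def C_def)
  qed
  show ?thesis
    unfolding \<rho>_def[symmetric]
  proof (rule integral_mult_le_of_quadratic_majorant[OF assms(1) sf _ _ _ _ _ G_F e_bdd e_mds e_var])
    show "AE x in M. exp (-l * (e x + z x)\<^sup>2) \<le> A x + B x * e x + C x * (e x)\<^sup>2"
      using e_bdd
    proof eventually_elim
      case (elim x)
      show ?case
        unfolding A_def B_def C_def by (rule exp_minus_sq_shift_le_quadratic[OF elim _ c]) (use l in simp)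
    qed
    have "exp (-l * K\<^sup>2) \<le> 1" "0 \<le> c * l\<^sup>2"
      using l c_nonneg by auto
    then have "exp (-l * K\<^sup>2) \<le> 1 + c * l\<^sup>2"
      by linarith
    then show "\<bar>A x\<bar> \<le> 1 + c * l\<^sup>2" "\<bar>B x\<bar> \<le> 4 * l * \<bar>K\<bar>" "\<bar>C x\<bar> \<le> l" for x
      using l c_nonneg by (auto simp: A_def B_def C_def abs_mult)
    show "\<bar>exp (-l * (e x + z x)\<^sup>2)\<bar> \<le> 1" "\<bar>G x\<bar> \<le> 1" for x
      using l G_nonneg[of x] G_le_1[of x] by auto
  qed (use G_nonneg mean_le_\<rho> in \<open>auto simp: A_def B_def C_def\<close>)
qed

lemma ereal_le_liminf_mean:
  fixes S :: "nat \<Rightarrow> real"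
  assumes "\<And>\<delta>. 0 < \<delta> \<Longrightarrow> eventually (\<lambda>n. (a - \<delta>) * real n < S n) sequentially"
  shows "ereal a \<le> liminf (\<lambda>n. ereal (S n / real n))"
proof (rule ereal_le_epsilon2)
  fix \<delta> :: real
  assume "0 < \<delta>"
  have "eventually (\<lambda>n. ereal (a - \<delta>) \<le> ereal (S n / real n)) sequentially"
    using assms[OF \<open>0 < \<delta>\<close>] eventually_ge_at_top[of 1]
    by eventually_elim (auto simp: pos_le_divide_eq less_imp_le)
  then have "ereal (a - \<delta>) \<le> liminf (\<lambda>n. ereal (S n / real n))"
    by (rule Liminf_bounded)
  then have "ereal (a - \<delta>) + ereal \<delta> \<le> liminf (\<lambda>n. ereal (S n / real n)) + ereal \<delta>"
    by (rule add_right_mono)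
  then show "ereal a \<le> liminf (\<lambda>n. ereal (S n / real n)) + ereal \<delta>"
    by simp
qed

locale bounded_innovations = prob_space M for M :: "'a measure" +
  fixes F :: "nat \<Rightarrow> 'a measure" and e z :: "nat \<Rightarrow> 'a \<Rightarrow> real" and K s2 :: real
  assumes sigma_finite_F: "\<And>n. sigma_finite_subalgebra M (F n)"
    and F_mono: "\<And>m n. m \<le> n \<Longrightarrow> sets (F m) \<subseteq> sets (F n)"
    and e_adapted: "\<And>n. e n \<in> borel_measurable (F n)"
    and z_predictable: "\<And>n. z (Suc n) \<in> borel_measurable (F n)"
    and e_bounded: "\<And>n. AE x in M. \<bar>e n x\<bar> \<le> K"
    and e_mds: "\<And>n. AE x in M. real_cond_exp M (F n) (e (Suc n)) x = 0"
    and e_cond_var: "\<And>n. AE x in M. real_cond_exp M (F n) (\<lambda>x. (e (Suc n) x)\<^sup>2) x = s2"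
begin

definition sq_sum :: "nat \<Rightarrow> 'a \<Rightarrow> real" where
  "sq_sum n x = (\<Sum>s=1..n. (e s x + z s x)\<^sup>2)"

lemma subalgebra_F: "subalgebra M (F n)"
  using sigma_finite_F by (simp add: sigma_finite_subalgebra_def)

lemma measurable_F_mono:
  assumes "f \<in> borel_measurable (F m)" and "m \<le> n"
  shows "f \<in> borel_measurable (F n)"
  using measurable_mono[of borel borel "F m" "F n"] F_mono[OF assms(2)] subalgebra_F assms(1)
  by (auto simp: subalgebra_def)

lemma e_measurable [measurable]: "e n \<in> borel_measurable M"
  using measurable_from_subalg[OF subalgebra_F e_adapted] .

lemma sq_sum_measurable_F: "sq_sum n \<in> borel_measurable (F n)"
proof -
  have "(\<lambda>x. (e s x + z s x)\<^sup>2) \<in> borel_measurable (F n)" if s: "s \<in> {1..n}" for s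
  proof -
    obtain k where k: "s = Suc k"
      using s by (cases s) auto
    have [measurable]: "e s \<in> borel_measurable (F n)" "z s \<in> borel_measurable (F n)"
      using measurable_F_mono[OF e_adapted] measurable_F_mono[OF z_predictable[of k]] s k by auto
    show ?thesis
      by measurable
  qed
  then have "(\<lambda>x. \<Sum>s=1..n. (e s x + z s x)\<^sup>2) \<in> borel_measurable (F n)"
    by (intro borel_measurable_sum) auto
  then show ?thesis
    by (simp add: sq_sum_def[abs_def])
qed

lemma sq_sum_measurable [measurable]: "sq_sum n \<in> borel_measurable M"
  using measurable_from_subalg[OF subalgebra_F sq_sum_measurable_F] .

lemma sq_sum_nonneg: "0 \<le> sq_sum n x"
  unfolding sq_sum_def by (intro sum_nonneg) auto

lemma integral_exp_sq_sum_le: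
  assumes l: "0 < l" and c: "81 * K ^ 4 \<le> c"
  shows "(\<integral>x. exp (-l * sq_sum n x) \<partial>M) \<le> exp (-l * s2 + c * l\<^sup>2) ^ n"
proof (induction n)
  case 0
  then show ?case
    by (simp add: sq_sum_def prob_space)
next
  case (Suc n)
  have [measurable]: "sq_sum n \<in> borel_measurable (F n)"
    by (rule sq_sum_measurable_F)
  have [measurable]: "(\<lambda>x. exp (-l * sq_sum n x)) \<in> borel_measurable (F n)"
    by measurable
  have "exp (-l * sq_sum (Suc n) x) = exp (-l * sq_sum n x) * exp (-l * (e (Suc n) x + z (Suc n) x)\<^sup>2)" for x
    by (simp add: sq_sum_def algebra_simps flip: exp_add)
  then have "(\<integral>x. exp (-l * sq_sum (Suc n) x) \<partial>M)
      = (\<integral>x. exp (-l * sq_sum n x) * exp (-l * (e (Suc n) x + z (Suc n) x)\<^sup>2) \<partial>M)"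
    by simp
  also have "\<dots> \<le> exp (-l * s2 + c * l\<^sup>2) * (\<integral>x. exp (-l * sq_sum n x) \<partial>M)"
    using l sq_sum_nonneg
    by (intro integral_mult_exp_minus_sq_le[OF prob_space_axioms sigma_finite_F e_measurable
          z_predictable _ e_bounded e_mds e_cond_var _ _ l c]) auto
  also have "\<dots> \<le> exp (-l * s2 + c * l\<^sup>2) * exp (-l * s2 + c * l\<^sup>2) ^ n"
    using Suc.IH by (intro mult_left_mono) auto
  finally show ?case
    by simp
qed

lemma measure_sq_sum_le_geometric:
  assumes "0 < \<delta>" and c_pos: "0 < c" and c: "81 * K ^ 4 \<le> c"
  shows "measure M {x \<in> space M. sq_sum n x \<le> (s2 - \<delta>) * real n} \<le> exp (-(\<delta>\<^sup>2 / (4 * c))) ^ n"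
proof -
  define l where "l = \<delta> / (2 * c)"
  have l: "0 < l"
    unfolding l_def using assms(1) c_pos by simp
  define a where "a = (s2 - \<delta>) * real n"
  have int: "integrable M (\<lambda>x. exp (-l * sq_sum n x))"
    using l sq_sum_nonneg by (intro integrable_const_bound[where B = 1]) auto
  then have "set_integrable M (space M) (\<lambda>x. exp (-l * sq_sum n x))"
    unfolding set_integrable_def by (rule integrable_mult_indicator[OF sets.top])
  then have "measure M {x \<in> space M. sq_sum n x \<le> a} \<le> exp (l * a) * (\<integral>x. exp (-l * sq_sum n x) \<partial>M)"
    using Chernoff_ineq_le[OF l _ sets.top, of "sq_sum n" a] set_integral_space[OF int] by simp
  also have "\<dots> \<le> exp (l * a) * exp (-l * s2 + c * l\<^sup>2) ^ n"
    using integral_exp_sq_sum_le[OF l c] by (intro mult_left_mono) auto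
  also have "\<dots> = exp (l * a + real n * (-l * s2 + c * l\<^sup>2))"
    by (simp add: exp_add exp_of_nat_mult)
  also have "l * a + real n * (-l * s2 + c * l\<^sup>2) = real n * (-(\<delta>\<^sup>2 / (4 * c)))"
    unfolding l_def a_def using c_pos by (simp add: field_simps power2_eq_square)
  also have "exp (real n * (-(\<delta>\<^sup>2 / (4 * c)))) = exp (-(\<delta>\<^sup>2 / (4 * c))) ^ n"
    by (rule exp_of_nat_mult)
  finally show ?thesis
    unfolding a_def .
qed

lemma AE_eventually_sq_sum_gt:
  assumes "0 < \<delta>"
  shows "AE x in M. eventually (\<lambda>n. (s2 - \<delta>) * real n < sq_sum n x) sequentially"
proof -
  define c where "c = 81 * K ^ 4 + 1"
  have "0 \<le> K ^ 4"
    by (simp add: zero_le_even_power)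
  then have c_pos: "0 < c" and c: "81 * K ^ 4 \<le> c"
    unfolding c_def by linarith+
  define A where "A n = {x \<in> space M. sq_sum n x \<le> (s2 - \<delta>) * real n}" for n
  have [measurable]: "A n \<in> sets M" for n
    unfolding A_def by measurable
  have "exp (-(\<delta>\<^sup>2 / (4 * c))) < 1"
    using assms c_pos by simp
  then have "summable (\<lambda>n. measure M (A n))"
    using measure_sq_sum_le_geometric[OF assms c_pos c]
    by (intro summable_comparison_test'[OF summable_geometric[of "exp (-(\<delta>\<^sup>2 / (4 * c)))"]])
       (auto simp: A_def)
  then have "AE x in M. eventually (\<lambda>n. x \<in> space M - A n) sequentially"
    by (intro borel_cantelli_AE1) (auto simp: less_top[symmetric])
  then show ?thesis
    by (rule AE_mp) (auto intro!: AE_I2 elim!: eventually_mono simp: A_def not_le)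
qed

lemma AE_liminf_mean_sq_sum_ge: "AE x in M. ereal s2 \<le> liminf (\<lambda>n. ereal (sq_sum n x / real n))"
proof -
  have "AE x in M. \<forall>m. eventually (\<lambda>n. (s2 - 1 / real (Suc m)) * real n < sq_sum n x) sequentially"
    unfolding AE_all_countable by (intro allI AE_eventually_sq_sum_gt) simp
  then show ?thesis
  proof eventually_elim
    case (elim x)
    show ?case
    proof (rule ereal_le_liminf_mean)
      fix \<delta> :: real
      assume "0 < \<delta>"
      then obtain m where m: "1 / real (Suc m) < \<delta>"
        using nat_approx_posE by blast
      have "(s2 - \<delta>) * real n \<le> (s2 - 1 / real (Suc m)) * real n" for n
        using m by (intro mult_right_mono) auto
      then show "eventually (\<lambda>n. (s2 - \<delta>) * real n < sq_sum n x) sequentially"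
        using elim[rule_format, of m] by (auto elim!: eventually_mono intro: le_less_trans)
    qed
  qed
qed

end


lemma space_natfilt [simp]: "space (natfilt M y t) = space M"
  unfolding natfilt_def by (simp add: space_measure_of_conv)

lemma sets_natfilt:
  "sets (natfilt M y t) = sigma_sets (space M) {y s -` A \<inter> space M | s A. s \<le> t \<and> A \<in> sets borel}"
  unfolding natfilt_def by (rule sets_measure_of) auto

lemma sets_natfilt_mono: "s \<le> t \<Longrightarrow> sets (natfilt M y s) \<subseteq> sets (natfilt M y t)"
  unfolding sets_natfilt by (intro sigma_sets_mono') (auto intro: order_trans)

lemma measurable_natfilt_mono:
  assumes "f \<in> borel_measurable (natfilt M y s)" and "s \<le> t"
  shows "f \<in> borel_measurable (natfilt M y t)"
  using measurable_mono[of borel borel "natfilt M y s" "natfilt M y t"] sets_natfilt_mono[OF assms(2)] assms(1)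
  by auto

lemma subalgebra_natfilt:
  assumes "\<And>s. y s \<in> borel_measurable M"
  shows "subalgebra M (natfilt M y t)"
proof -
  have "sets (natfilt M y t) \<subseteq> sets M"
    unfolding sets_natfilt using assms by (intro sets.sigma_sets_subset) (auto simp: measurable_sets)
  then show ?thesis
    by (simp add: subalgebra_def)
qed

lemma (in finite_measure) sigma_finite_subalgebra_natfilt:
  assumes "\<And>s. y s \<in> borel_measurable M"
  shows "sigma_finite_subalgebra M (natfilt M y t)"
  by (rule finite_measure_subalgebra_is_sigma_finite)
     (simp add: finite_measure_subalgebra_def finite_measure_subalgebra_axioms_def
        subalgebra_natfilt[OF assms] finite_measure_axioms)

lemma sums_split_first:
  fixes k :: "nat \<Rightarrow> real" and e :: "int \<Rightarrow> real"
  assumes "(\<lambda>s. k s * e (t - int s)) sums y" and "k 0 = 1"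
  shows "y = e t + (\<Sum>i. k (Suc i) * e (t - 1 - int i))"
proof -
  have "(\<lambda>i. k (Suc i) * e (t - int (Suc i))) sums (y - k 0 * e (t - int 0))"
    using assms(1) by (subst sums_Suc_iff) simp
  moreover have "(\<lambda>i. k (Suc i) * e (t - int (Suc i))) = (\<lambda>i. k (Suc i) * e (t - 1 - int i))"
    by (simp add: algebra_simps)
  ultimately show ?thesis
    using assms(2) by (simp add: sums_iff)
qed

lemma prediction_error_split_natfilt:
  fixes y eps ytil :: "int \<Rightarrow> 'a \<Rightarrow> real" and kappa :: "nat \<Rightarrow> real"
  assumes y_ma: "\<And>t. AE x in M. (\<lambda>s. kappa s * eps (t - int s) x) sums y t x"
    and kappa0: "kappa 0 = 1"
    and eps_adapted: "\<And>t. eps t \<in> borel_measurable (natfilt M y t)"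
    and ytil_meas: "\<And>t. ytil (t - 1) \<in> borel_measurable (natfilt M y (t - 1))"
  obtains z where "\<And>t. z t \<in> borel_measurable (natfilt M y (t - 1))"
    and "AE x in M. \<forall>t. y t x - ytil (t - 1) x = eps t x + z t x"
proof
  define z where "z t x = (\<Sum>i. kappa (Suc i) * eps (t - 1 - int i) x) - ytil (t - 1) x" for t x
  show "z t \<in> borel_measurable (natfilt M y (t - 1))" for t
  proof -
    have "(\<lambda>x. kappa (Suc i) * eps (t - 1 - int i) x) \<in> borel_measurable (natfilt M y (t - 1))" for i
      using measurable_natfilt_mono[OF eps_adapted[of "t - 1 - int i"], of "t - 1"] by simp
    then have "(\<lambda>x. \<Sum>i. kappa (Suc i) * eps (t - 1 - int i) x) \<in> borel_measurable (natfilt M y (t - 1))"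
      by (rule borel_measurable_suminf)
    then show ?thesis
      unfolding z_def using ytil_meas[of t] by measurable
  qed
  have "AE x in M. \<forall>t. (\<lambda>s. kappa s * eps (t - int s) x) sums y t x"
    unfolding AE_all_countable using y_ma by blast
  then show "AE x in M. \<forall>t. y t x - ytil (t - 1) x = eps t x + z t x"
  proof eventually_elim
    case (elim x)
    show ?case
      using sums_split_first[where k = kappa, OF elim[rule_format] kappa0] by (simp add: z_def)
  qed
qed

lemma (in prob_space) bounded_innovations_natfilt:
  fixes y eps z :: "int \<Rightarrow> 'a \<Rightarrow> real"
  assumes y_meas: "\<And>t. y t \<in> borel_measurable M"
    and eps_adapted: "\<And>t. eps t \<in> borel_measurable (natfilt M y t)"
    and z_predictable: "\<And>t. z t \<in> borel_measurable (natfilt M y (t - 1))"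
    and eps_bdd: "AE x in M. \<forall>t. \<bar>eps t x\<bar> \<le> K"
    and eps_mds: "\<And>t. AE x in M. real_cond_exp M (natfilt M y (t - 1)) (eps t) x = 0"
    and eps_cvar: "\<And>t. AE x in M. real_cond_exp M (natfilt M y (t - 1)) (\<lambda>x. (eps t x)\<^sup>2) x = s2"
  shows "bounded_innovations M (\<lambda>n. natfilt M y (int n)) (\<lambda>n. eps (int n)) (\<lambda>n. z (int n)) K s2"
proof (intro_locales, rule bounded_innovations_axioms.intro)
  fix m n :: nat
  show "sigma_finite_subalgebra M (natfilt M y (int n))"
    by (rule sigma_finite_subalgebra_natfilt[OF y_meas])
  show "m \<le> n \<Longrightarrow> sets (natfilt M y (int m)) \<subseteq> sets (natfilt M y (int n))"
    by (simp add: sets_natfilt_mono)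
  show "z (int (Suc n)) \<in> borel_measurable (natfilt M y (int n))"
    using z_predictable[of "int (Suc n)"] by simp
  show "AE x in M. \<bar>eps (int n) x\<bar> \<le> K"
    using eps_bdd by (auto elim!: eventually_mono)
  show "AE x in M. real_cond_exp M (natfilt M y (int n)) (eps (int (Suc n))) x = 0"
    using eps_mds[of "int (Suc n)"] by simp
  show "AE x in M. real_cond_exp M (natfilt M y (int n)) (\<lambda>x. (eps (int (Suc n)) x)\<^sup>2) x = s2"
    using eps_cvar[of "int (Suc n)"] by simp
qed (rule eps_adapted)

theorem proposition4p3:
  fixes M :: "'a measure"
    and y eps ytil :: "int \<Rightarrow> 'a \<Rightarrow> real"
    and kappa :: "nat \<Rightarrow> real"
    and sigma2 K p :: real
  assumes "prob_space M"
    \<comment> \<open>real, mean-zero, covariance-stationary series\<close>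
    and y_meas: "\<And>t. y t \<in> borel_measurable M"
    and y_sq_int: "\<And>t. integrable M (\<lambda>x. (y t x)\<^sup>2)"
    and y_mean: "\<And>t. integral\<^sup>L M (y t) = 0"
    and y_cov: "\<And>t h. integral\<^sup>L M (\<lambda>x. y t x * y (t + h) x) = integral\<^sup>L M (\<lambda>x. y 0 x * y h x)"
    \<comment> \<open>MA(infinity) representation\<close>
    and y_ma: "\<And>t. AE x in M. (\<lambda>s. kappa s * eps (t - int s) x) sums y t x"
    and kappa0: "kappa 0 = 1"
    and kappa_abs: "summable (\<lambda>s. \<bar>kappa s\<bar>)"
    and kappa_nz: "\<And>z::complex. norm z \<le> 1 \<Longrightarrow> (\<Sum>s. complex_of_real (kappa s) * z ^ s) \<noteq> 0"
    \<comment> \<open>martingale difference sequence w.r.t. the natural filtration of y\<close>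
    and eps_adapted: "\<And>t. eps t \<in> borel_measurable (natfilt M y t)"
    and eps_int: "\<And>t. integrable M (eps t)"
    and eps_mds: "\<And>t. AE x in M. real_cond_exp M (natfilt M y (t - 1)) (eps t) x = 0"
    \<comment> \<open>constant conditional variance\<close>
    and eps_cvar: "\<And>t. AE x in M. real_cond_exp M (natfilt M y (t - 1)) (\<lambda>x. (eps t x)\<^sup>2) x = sigma2"
    \<comment> \<open>uniformly bounded innovations\<close>
    and eps_bdd: "AE x in M. \<forall>t. \<bar>eps t x\<bar> \<le> K"
    \<comment> \<open>conditional 2p-th moment bound\<close>
    and p_gt: "p > 1"
    and eps_mom: "AE x in M. (SUP t. nn_cond_exp M (natfilt M y (t - 1))
                      (\<lambda>x. ennreal (\<bar>eps t x\<bar> powr (2 * p))) x) < \<top>"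
    \<comment> \<open>the predictor is F_{t-1}-measurable\<close>
    and ytil_meas: "\<And>t. ytil (t - 1) \<in> borel_measurable (natfilt M y (t - 1))"
  shows "AE x in M. ereal sigma2 \<le>
           liminf (\<lambda>t::nat. ereal ((\<Sum>s=1..t. (y (int s) x - ytil (int s - 1) x)\<^sup>2) / real t))"
proof -
  interpret prob_space M by fact
  obtain z where z_predictable: "\<And>t. z t \<in> borel_measurable (natfilt M y (t - 1))"
    and prediction_error: "AE x in M. \<forall>t. y t x - ytil (t - 1) x = eps t x + z t x"
    using prediction_error_split_natfilt[OF y_ma kappa0 eps_adapted ytil_meas] by blast
  interpret bounded_innovations M "\<lambda>n. natfilt M y (int n)" "\<lambda>n. eps (int n)" "\<lambda>n. z (int n)" K sigma2
    by (rule bounded_innovations_natfilt[OF y_meas eps_adapted z_predictable eps_bdd eps_mds eps_cvar])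
  show ?thesis
    using AE_liminf_mean_sq_sum_ge prediction_error by eventually_elim (simp add: sq_sum_def)
qed

end
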